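(* Let $s$ be a node and let $U$ be a nonempty set of neighbors of $s$ in the communication graph $G$ (the "unexplored neighbors" of $s$), and let $m=|U|$. Suppose procedure ESUN is run with $s$ as initiator, with only the nodes of $U$ transmitting during it. Then, for appropriately chosen constants $d$ and $\epsilon'$ in the procedure, the upper bound $x$ declared by $s$ satisfies $m\le x\le 16m$ with high probability.
   Context: Model: $n$ nodes in the Euclidean plane with unique names in $\{1,\dots,N\}$, $N\ge n$ ($N$ a power of 2); synchronous rounds, each node transmits or listens in each round, no collision detection. Uniform power $P$, parameters $\alpha>2$, $\mathcal{N}>0$, $\beta\ge1$, $\varepsilon\in(0,1)$, $r=(P/(\mathcal{N}\beta))^{1/\alpha}$. If set $\mathcal{T}$ transmits, $u\notin\mathcal{T}$ receives the message of $v\in\mathcal{T}$ iff $\frac{P\,\mathrm{dist}(v,u)^{-\alpha}}{\mathcal{N}+\sum_{w\in\mathcal{T}\setminus\{v\}}P\,\mathrm{dist}(w,u)^{-\alpha}}\ge\beta$ and $\mathrm{dist}(v,u)\le(1-\varepsilon)r$. Communication graph $G$: $u,v$ adjacent iff $\mathrm{dist}(u,v)\le(1-\varepsilon)r$. Procedure ESUN (Estimate the Size of the Unexplored Neighborhood), initiated by $s$: Stage 1 consists of $\log N$ sub-stages; in sub-stage $i$ ($i=1,\dots,\log N$), for $d\log N$ rounds, each node of $U$ independently transmits in each round with probability $1/2^i$, while $s$ listens; let $n_i$ be the number of rounds of sub-stage $i$ in which $s$ successfully receives a message. Stage 2: let $k$ be the largest $i$ with $n_i\ge \frac{d\log N}{8}(1-\epsilon')$;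 $s$ declares $x=2^k$ as an upper bound on the size of its unexplored neighborhood. "With high probability" means with probability at least $1-n^{-d''}$ for a sufficiently large constant $d''\ge1$. *)

theory Defs
  imports "HOL-Probability.Probability"
begin

definition sinr_range :: "real \<Rightarrow> real \<Rightarrow> real \<Rightarrow> real \<Rightarrow> real" where
  "sinr_range P alpha noise beta = (P / (noise * beta)) powr (1 / alpha)"

definition sinr_receives ::
  "real \<Rightarrow> real \<Rightarrow> real \<Rightarrow> real \<Rightarrow> real \<Rightarrow> (nat \<Rightarrow> real^2) \<Rightarrow> nat set \<Rightarrow> nat \<Rightarrow> nat \<Rightarrow> bool" where
  "sinr_receives P alpha noise beta eps pos T v u \<longleftrightarrow>
     v \<in> T \<and> u \<notin> T \<and>
     P * dist (pos v) (pos u) powr (- alpha)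
       / (noise + (\<Sum>w\<in>T - {v}. P * dist (pos w) (pos u) powr (- alpha))) \<ge> beta \<and>
     dist (pos v) (pos u) \<le> (1 - eps) * sinr_range P alpha noise beta"

definition receives_some ::
  "real \<Rightarrow> real \<Rightarrow> real \<Rightarrow> real \<Rightarrow> real \<Rightarrow> (nat \<Rightarrow> real^2) \<Rightarrow> nat set \<Rightarrow> nat \<Rightarrow> bool" where
  "receives_some P alpha noise beta eps pos T u \<longleftrightarrow>
     (\<exists>v\<in>T. sinr_receives P alpha noise beta eps pos T v u)"

text \<open>Random choices of ESUN: omega (i, j, u) says whether node u transmits in round j
of sub-stage i; independently with probability 1/2^i, for i in 1..L (L = log N),
j < d*L, u in U.\<close>
definition esun_coins :: "nat \<Rightarrow> nat \<Rightarrow> nat set \<Rightarrow> (nat \<times> nat \<times> nat \<Rightarrow> bool) pmf" where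
  "esun_coins L d U =
     Pi_pmf ({1..L} \<times> {..<d * L} \<times> U) False (\<lambda>(i, j, u). bernoulli_pmf (1 / 2 ^ i))"

definition esun_count ::
  "real \<Rightarrow> real \<Rightarrow> real \<Rightarrow> real \<Rightarrow> real \<Rightarrow> (nat \<Rightarrow> real^2) \<Rightarrow> nat \<Rightarrow> nat \<Rightarrow> nat set \<Rightarrow> nat
    \<Rightarrow> (nat \<times> nat \<times> nat \<Rightarrow> bool) \<Rightarrow> nat \<Rightarrow> nat" where
  "esun_count P alpha noise beta eps pos L d U s omega i =
     card {j. j < d * L \<and> receives_some P alpha noise beta eps pos {u \<in> U. omega (i, j, u)} s}"

definition esun_estimate ::
  "real \<Rightarrow> real \<Rightarrow> real \<Rightarrow> real \<Rightarrow> real \<Rightarrow> (nat \<Rightarrow> real^2) \<Rightarrow> nat \<Rightarrow> nat \<Rightarrow> real \<Rightarrow> nat set \<Rightarrow> nat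
    \<Rightarrow> (nat \<times> nat \<times> nat \<Rightarrow> bool) \<Rightarrow> nat option" where
  "esun_estimate P alpha noise beta eps pos L d eps' U s omega =
     (let Q = {i \<in> {1..L}. real (esun_count P alpha noise beta eps pos L d U s omega i)
                             \<ge> real (d * L) / 8 * (1 - eps')}
      in if Q = {} then None else Some (2 ^ Max Q))"

end

theory Submission
  imports Defs "HOL-Library.Discrete_Functions"
begin

text \<open>
  In sub-stage i every round is an independent trial, so the count n_i is binomially
  distributed with some success probability q_i. A lone transmitter within range is always
  heard, so q_i is at least the probability that exactly one node of U transmits; for the
  i with m <= 2^i <= 2m this is at least (1/2) (1 - 1/m)^(m-1) >= 1/6. Conversely success
  needs some transmitter, so q_i <= m/2^i < 1/16 whenever 2^i > 16m. With eps' = 1/4 the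
  threshold is 3/32 of the rounds, at distance 1/32 from both bounds; Hoeffding's inequality
  and a union bound over the sub-stages put every relevant count on the correct side of the
  threshold except with probability L exp(-dL/512), and this is at most |V|^(-d'') once
  d >= 512 (1 + d'').
\<close>

lemma Pi_pmf_curry:
  assumes A: "finite A" and B: "finite B"
  shows "map_pmf (\<lambda>w a b. w (a,b)) (Pi_pmf (A \<times> B) d (\<lambda>(a,b). q a b))
         = Pi_pmf A (\<lambda>_. d) (\<lambda>a. Pi_pmf B d (q a))"
proof (rule pmf_eqI)
  fix F :: "'a \<Rightarrow> 'b \<Rightarrow> 'c"
  have inj: "inj (\<lambda>(w::'a\<times>'b\<Rightarrow>'c) a b. w (a,b))"
    by (auto simp: inj_def fun_eq_iff)
  have F: "F = (\<lambda>w a b. w (a,b)) (\<lambda>x. F (fst x) (snd x))" by simp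
  have "pmf (map_pmf (\<lambda>w a b. w (a,b)) (Pi_pmf (A \<times> B) d (\<lambda>(a,b). q a b))) F
      = pmf (Pi_pmf (A \<times> B) d (\<lambda>(a,b). q a b)) (\<lambda>x. F (fst x) (snd x))"
    by (subst F, subst pmf_map_inj'[OF inj]) simp
  also have "\<dots> = pmf (Pi_pmf A (\<lambda>_. d) (\<lambda>a. Pi_pmf B d (q a))) F"
  proof (cases "\<forall>a b. (a,b) \<notin> A \<times> B \<longrightarrow> F a b = d")
    case True
    then have "\<forall>a. a \<notin> A \<longrightarrow> F a = (\<lambda>_. d)" by auto
    moreover have "\<forall>a\<in>A. \<forall>b. b \<notin> B \<longrightarrow> F a b = d" using True by auto
    ultimately show ?thesis using True A B
      by (simp add: pmf_Pi prod.cartesian_product[of "\<lambda>a b. pmf (q a b) (F a b)"] case_prod_unfold)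
  next
    case False
    then obtain a b where ab: "(a,b) \<notin> A \<times> B" "F a b \<noteq> d" by auto
    have l: "pmf (Pi_pmf (A \<times> B) d (\<lambda>(a,b). q a b)) (\<lambda>x. F (fst x) (snd x)) = 0"
      using ab A B by (subst pmf_Pi) auto
    show ?thesis
    proof (cases "a \<in> A")
      case True
      with ab have "b \<notin> B" by auto
      then have "pmf (Pi_pmf B d (q a)) (F a) = 0" using ab B by (subst pmf_Pi) auto
      then show ?thesis using l A True by (simp add: pmf_Pi prod_zero_iff) blast
    next
      case False
      then show ?thesis using l A ab by (subst pmf_Pi) (auto simp: fun_eq_iff)
    qed
  qed
  finally show "pmf (map_pmf (\<lambda>w a b. w (a,b)) (Pi_pmf (A \<times> B) d (\<lambda>(a,b). q a b))) F
      = pmf (Pi_pmf A (\<lambda>_. d) (\<lambda>a. Pi_pmf B d (q a))) F" .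
qed

lemma pmf_bool_eq_bernoulli: "(M :: bool pmf) = bernoulli_pmf (measure_pmf.prob M {True})"
proof (rule pmf_eqI)
  fix b :: bool
  have "UNIV - {True} = {False}" by auto
  then have "measure_pmf.prob M {False} = 1 - measure_pmf.prob M {True}"
    using measure_pmf.prob_compl[of "{True}" M] by simp
  moreover have "measure_pmf.prob M {True} \<in> {0..1}" by auto
  ultimately show "pmf M b = pmf (bernoulli_pmf (measure_pmf.prob M {True})) b"
    by (cases b) (auto simp: measure_pmf_single)
qed

lemma prob_Pi_bernoulli_ex_le:
  fixes p :: real
  assumes U: "finite U" and p: "p \<in> {0..1}"
  shows "measure_pmf.prob (Pi_pmf U False (\<lambda>_. bernoulli_pmf p)) {F. \<exists>u\<in>U. F u} \<le> card U * p"
proof -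
  let ?M = "Pi_pmf U False (\<lambda>_. bernoulli_pmf p)"
  have component: "measure_pmf.prob ?M {F. F u} = p" if "u \<in> U" for u
  proof -
    have "measure_pmf.prob ?M {F. F u} = measure_pmf.prob (map_pmf (\<lambda>F. F u) ?M) {True}"
      by (simp add: vimage_def)
    also have "map_pmf (\<lambda>F. F u) ?M = bernoulli_pmf p"
      using that U by (subst Pi_pmf_component) auto
    finally show ?thesis using p by (simp add: measure_pmf_single)
  qed
  have "{F. \<exists>u\<in>U. F u} = (\<Union>u\<in>U. {F. F u})" by auto
  then have "measure_pmf.prob ?M {F. \<exists>u\<in>U. F u} \<le> (\<Sum>u\<in>U. measure_pmf.prob ?M {F. F u})"
    using U by (auto intro: measure_pmf.finite_measure_subadditive_finite)
  also have "\<dots> = card U * p" using component by simp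
  finally show ?thesis .
qed

lemma prob_Pi_bernoulli_exactly_one:
  fixes p :: real
  assumes U: "finite U" and p: "p \<in> {0..1}"
  shows "measure_pmf.prob (Pi_pmf U False (\<lambda>_. bernoulli_pmf p)) {F. \<exists>u\<in>U. {v\<in>U. F v} = {u}}
           = card U * p * (1 - p) ^ (card U - 1)"
proof -
  let ?M = "Pi_pmf U False (\<lambda>_. bernoulli_pmf p)"
  define E where "E u = Pi U (\<lambda>v. if v = u then {True} else {False})" for u
  have union: "{F. \<exists>u\<in>U. {v\<in>U. F v} = {u}} = (\<Union>u\<in>U. E u)"
    by (auto simp: E_def Pi_def split: if_splits)
  have prob_E: "measure_pmf.prob ?M (E u) = p * (1 - p) ^ (card U - 1)" if u: "u \<in> U" for u
  proof -
    have "measure_pmf.prob ?M (E u)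
        = (\<Prod>v\<in>U. measure_pmf.prob (bernoulli_pmf p) (if v = u then {True} else {False}))"
      unfolding E_def using U by (rule measure_Pi_pmf_Pi)
    also have "\<dots> = (\<Prod>v\<in>U. if v = u then p else 1 - p)"
      using p by (intro prod.cong) (auto simp: measure_pmf_single)
    also have "\<dots> = p * (\<Prod>v\<in>U - {u}. 1 - p)"
      using U u by (subst prod.remove[of U u]) (auto intro!: prod.cong)
    finally show ?thesis using U u by simp
  qed
  have "disjoint_family_on E U"
    unfolding disjoint_family_on_def E_def by (auto simp: Pi_def)
  then have "measure_pmf.prob ?M (\<Union>u\<in>U. E u) = (\<Sum>u\<in>U. measure_pmf.prob ?M (E u))"
    using U by (intro measure_pmf.finite_measure_finite_Union) auto
  then show ?thesis using union prob_E by simp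
qed

lemma one_minus_inverse_power_ge:
  assumes "m \<ge> (1::nat)"
  shows "(1 - 1 / real m) ^ (m - 1) \<ge> 1 / 3"
proof (cases "m = 1")
  case False
  define k where "k = m - 1"
  have k: "k \<ge> 1" "m = k + 1" using assms False by (auto simp: k_def)
  have "(1 + 1 / real k) ^ k \<le> exp 1"
    using exp_ge_one_plus_x_over_n_power_n[where x=1 and n=k] k(1) by simp
  also have "\<dots> \<le> 3" by (rule exp_le)
  finally have "(1 + 1 / real k) ^ k \<le> 3" .
  moreover have "1 - 1 / real m = inverse (1 + 1 / real k)" using k by (simp add: field_simps)
  ultimately show ?thesis
    using k by (simp add: power_inverse k_def[symmetric] field_simps)
qed simp

lemma mult_one_minus_power_ge:
  fixes p :: real
  assumes m: "m \<ge> (1::nat)" and p: "1 / (2 * real m) \<le> p" "p \<le> 1 / real m"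
  shows "real m * p * (1 - p) ^ (m - 1) \<ge> 1 / 6"
proof -
  have "real m * p \<ge> 1 / 2" using p m by (simp add: field_simps)
  moreover have "(1 - p) ^ (m - 1) \<ge> (1 - 1 / real m) ^ (m - 1)"
    using p m by (intro power_mono) (auto simp: field_simps)
  ultimately have "real m * p * (1 - p) ^ (m - 1) \<ge> 1 / 2 * (1 / 3)"
    using one_minus_inverse_power_ge[OF m] by (intro mult_mono) auto
  then show ?thesis by simp
qed

lemma power_of_two_between:
  assumes "m \<ge> (1::nat)" and "m < 2 ^ L"
  obtains i where "1 \<le> i" "i \<le> L" "m \<le> 2 ^ i" "2 ^ i \<le> 2 * m"
proof
  let ?i = "Suc (floor_log m)"
  have low: "2 ^ floor_log m \<le> m" using assms floor_log_exp2_le by auto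
  show "1 \<le> ?i" by simp
  show "m \<le> 2 ^ ?i" using floor_log_exp2_gt[of m] by simp
  show "2 ^ ?i \<le> 2 * m" using low by simp
  have "2 ^ floor_log m < (2::nat) ^ L" using low assms by linarith
  then show "?i \<le> L" using power_less_imp_less_exp[of 2] by simp
qed

lemma receives_some_singleton:
  assumes P: "P > 0" and alpha: "alpha > 2" and noise: "noise > 0" and beta: "beta \<ge> 1"
    and eps: "0 < eps" "eps < 1" and "u \<noteq> s" and "pos u \<noteq> pos s"
    and in_range: "dist (pos u) (pos s) \<le> (1 - eps) * sinr_range P alpha noise beta"
  shows "receives_some P alpha noise beta eps pos {u} s"
proof -
  define D where "D = dist (pos u) (pos s)"
  define r where "r = sinr_range P alpha noise beta"
  have D: "D > 0" using \<open>pos u \<noteq> pos s\<close> by (simp add: D_def)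
  have "r \<ge> 0" by (simp add: r_def sinr_range_def)
  then have "D \<le> r" using in_range eps unfolding D_def[symmetric] r_def[symmetric]
    by (smt (verit) mult_left_le_one_le)
  then have "D powr alpha \<le> r powr alpha"
    using D alpha by (intro powr_mono2) auto
  also have "r powr alpha = P / (noise * beta)"
    unfolding r_def sinr_range_def using P noise beta alpha by (simp add: powr_powr)
  finally have "beta * noise * D powr alpha \<le> P"
    using noise beta by (simp add: field_simps)
  then have "P * D powr (- alpha) / noise \<ge> beta"
    using D noise by (simp add: powr_minus field_simps)
  then show ?thesis
    using \<open>u \<noteq> s\<close> in_range by (simp add: receives_some_def sinr_receives_def D_def)
qed

context
  fixes P alpha noise beta eps :: real and pos :: "nat \<Rightarrow> real^2"
begin

definition success_prob :: "nat set \<Rightarrow> nat \<Rightarrow> nat \<Rightarrow> real" where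
  "success_prob U s i =
     measure_pmf.prob (Pi_pmf U False (\<lambda>_. bernoulli_pmf (1 / 2 ^ i)))
       {F. receives_some P alpha noise beta eps pos {u \<in> U. F u} s}"

lemma success_prob_le:
  assumes "finite U"
  shows "success_prob U s i \<le> card U / 2 ^ i"
proof -
  have "{F. receives_some P alpha noise beta eps pos {u \<in> U. F u} s} \<subseteq> {F. \<exists>u\<in>U. F u}"
    by (auto simp: receives_some_def)
  then have "success_prob U s i
      \<le> measure_pmf.prob (Pi_pmf U False (\<lambda>_. bernoulli_pmf (1 / 2 ^ i))) {F. \<exists>u\<in>U. F u}"
    unfolding success_prob_def by (intro measure_pmf.finite_measure_mono) auto
  also have "\<dots> \<le> card U * (1 / 2 ^ i)"
    using assms by (intro prob_Pi_bernoulli_ex_le) auto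
  finally show ?thesis by simp
qed

lemma success_prob_ge_one_sixth:
  assumes U: "finite U" "U \<noteq> {}"
    and lone: "\<And>u. u \<in> U \<Longrightarrow> receives_some P alpha noise beta eps pos {u} s"
    and i: "card U \<le> 2 ^ i" "2 ^ i \<le> 2 * card U"
  shows "success_prob U s i \<ge> 1 / 6"
proof -
  let ?p = "1 / 2 ^ i :: real"
  have m: "card U \<ge> 1" using U by (simp add: Suc_le_eq card_gt_0_iff)
  have "1 / (2 * real (card U)) \<le> ?p"
    using i m by (simp add: field_simps) (metis of_nat_le_iff of_nat_mult of_nat_numeral of_nat_power)
  moreover have "?p \<le> 1 / real (card U)"
    using i m by (simp add: field_simps)
  ultimately have "1 / 6 \<le> card U * ?p * (1 - ?p) ^ (card U - 1)"
    using m by (intro mult_one_minus_power_ge)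
  also have "\<dots> = measure_pmf.prob (Pi_pmf U False (\<lambda>_. bernoulli_pmf ?p))
                    {F. \<exists>u\<in>U. {v\<in>U. F v} = {u}}"
    using U by (intro prob_Pi_bernoulli_exactly_one[symmetric]) auto
  also have "\<dots> \<le> success_prob U s i"
    unfolding success_prob_def using lone by (intro measure_pmf.finite_measure_mono) auto
  finally show ?thesis .
qed

lemma esun_coins_substage:
  assumes i: "i \<in> {1..L}" and U: "finite U"
  shows "map_pmf (\<lambda>\<omega> j u. \<omega> (i,j,u)) (esun_coins L d U)
       = Pi_pmf {..<d*L} (\<lambda>_. False) (\<lambda>_. Pi_pmf U False (\<lambda>_. bernoulli_pmf (1 / 2 ^ i)))"
proof -
  let ?J = "{..<d*L}" and ?b = "\<lambda>i. bernoulli_pmf (1 / 2 ^ i)"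
  have coins: "esun_coins L d U = Pi_pmf ({1..L} \<times> (?J \<times> U)) False (\<lambda>(i, _). ?b i)"
    unfolding esun_coins_def by (intro arg_cong[where f="Pi_pmf _ _"]) auto
  have "map_pmf (\<lambda>\<omega> j u. \<omega> (i,j,u)) (esun_coins L d U)
     = map_pmf (\<lambda>w a b. w (a,b)) (map_pmf (\<lambda>W. W i) (map_pmf (\<lambda>w a b. w (a,b)) (esun_coins L d U)))"
    by (simp add: pmf.map_comp o_def)
  also have "map_pmf (\<lambda>w a b. w (a,b)) (esun_coins L d U)
      = Pi_pmf {1..L} (\<lambda>_. False) (\<lambda>i. Pi_pmf (?J \<times> U) False (\<lambda>_. ?b i))"
    unfolding coins using U Pi_pmf_curry[of "{1..L}" "?J \<times> U" False "\<lambda>i _. ?b i"]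
    by (simp add: case_prod_unfold)
  also have "map_pmf (\<lambda>W. W i) \<dots> = Pi_pmf (?J \<times> U) False (\<lambda>_. ?b i)"
    using i by (subst Pi_pmf_component) auto
  also have "map_pmf (\<lambda>w a b. w (a,b)) \<dots> = Pi_pmf ?J (\<lambda>_. False) (\<lambda>_. Pi_pmf U False (\<lambda>_. ?b i))"
    using U Pi_pmf_curry[of ?J U False "\<lambda>_ _. ?b i"] by (simp add: case_prod_unfold)
  finally show ?thesis .
qed

lemma esun_count_binomial:
  assumes i: "i \<in> {1..L}" and U: "finite U"
  shows "map_pmf (\<lambda>\<omega>. esun_count P alpha noise beta eps pos L d U s \<omega> i) (esun_coins L d U)
       = binomial_pmf (d*L) (success_prob U s i)"
proof -
  let ?J = "{..<d*L}" and ?PU = "Pi_pmf U False (\<lambda>_. bernoulli_pmf (1 / 2 ^ i))"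
  define g where "g F = receives_some P alpha noise beta eps pos {u \<in> U. F u} s" for F
  have bernoulli: "map_pmf g ?PU = bernoulli_pmf (success_prob U s i)"
    by (subst pmf_bool_eq_bernoulli) (simp add: success_prob_def g_def vimage_def)
  have "map_pmf (\<lambda>H. g \<circ> H) (map_pmf (\<lambda>\<omega> j u. \<omega> (i,j,u)) (esun_coins L d U))
     = Pi_pmf ?J (g (\<lambda>_. False)) (\<lambda>_. map_pmf g ?PU)"
    unfolding esun_coins_substage[OF i U] by (subst Pi_pmf_map) auto
  then have rounds: "map_pmf (\<lambda>H. g \<circ> H) (map_pmf (\<lambda>\<omega> j u. \<omega> (i,j,u)) (esun_coins L d U))
     = Pi_pmf ?J (g (\<lambda>_. False)) (\<lambda>_. bernoulli_pmf (success_prob U s i))"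
    by (simp add: bernoulli)
  have "map_pmf (\<lambda>\<omega>. esun_count P alpha noise beta eps pos L d U s \<omega> i) (esun_coins L d U)
     = map_pmf (\<lambda>H. card {j\<in>?J. H j})
         (map_pmf (\<lambda>H. g \<circ> H) (map_pmf (\<lambda>\<omega> j u. \<omega> (i,j,u)) (esun_coins L d U)))"
    by (simp add: pmf.map_comp o_def esun_count_def g_def)
  also have "\<dots> = binomial_pmf (d*L) (success_prob U s i)"
    unfolding rounds by (rule binomial_pmf_altdef'[symmetric]) (auto simp: success_prob_def)
  finally show ?thesis .
qed

lemma prob_esun_count:
  assumes "i \<in> {1..L}" and "finite U"
  shows "measure_pmf.prob (esun_coins L d U) {\<omega>. A (esun_count P alpha noise beta eps pos L d U s \<omega> i)}
       = measure_pmf.prob (binomial_pmf (d*L) (success_prob U s i)) {k. A k}"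
  by (simp flip: esun_count_binomial[OF assms] add: vimage_def)

lemma prob_esun_count_less_le:
  fixes c \<delta> :: real
  assumes i: "i \<in> {1..L}" and U: "finite U" and "d > 0"
    and "c + \<delta> \<le> success_prob U s i" and "\<delta> \<ge> 0"
  shows "measure_pmf.prob (esun_coins L d U)
           {\<omega>. real (esun_count P alpha noise beta eps pos L d U s \<omega> i) < c * real (d*L)}
         \<le> exp (-2 * real (d*L) * \<delta>\<^sup>2)"
proof -
  let ?n = "d * L" and ?q = "success_prob U s i"
  interpret binomial_distribution ?n ?q by unfold_locales (auto simp: success_prob_def)
  have n: "?n > 0" using assms by auto
  have "{k. real k < c * ?n} \<subseteq> {k. real k / ?n \<le> ?q - \<delta>}"
  proof safe
    fix k assume "real k < c * ?n"
    then have "real k / ?n < c" using n by (simp add: field_simps)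
    then show "real k / ?n \<le> ?q - \<delta>" using assms by simp
  qed
  then have "measure_pmf.prob (binomial_pmf ?n ?q) {k. real k < c * ?n}
      \<le> measure_pmf.prob (binomial_pmf ?n ?q) {k. real k / ?n \<le> ?q - \<delta>}"
    by (intro measure_pmf.finite_measure_mono) auto
  also have "\<dots> \<le> exp (- 2 * real ?n * \<delta>\<^sup>2)"
    using prob_le'[OF n \<open>\<delta> \<ge> 0\<close>] by simp
  finally show ?thesis using prob_esun_count[OF i U, where A = "\<lambda>k. real k < c * real ?n"] by simp
qed

lemma prob_esun_count_ge_le:
  fixes c \<delta> :: real
  assumes i: "i \<in> {1..L}" and U: "finite U" and "d > 0"
    and "success_prob U s i + \<delta> \<le> c" and "\<delta> \<ge> 0"
  shows "measure_pmf.prob (esun_coins L d U)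
           {\<omega>. real (esun_count P alpha noise beta eps pos L d U s \<omega> i) \<ge> c * real (d*L)}
         \<le> exp (-2 * real (d*L) * \<delta>\<^sup>2)"
proof -
  let ?n = "d * L" and ?q = "success_prob U s i"
  interpret binomial_distribution ?n ?q by unfold_locales (auto simp: success_prob_def)
  have n: "?n > 0" using assms by auto
  have "{k. real k \<ge> c * ?n} \<subseteq> {k. real k / ?n \<ge> ?q + \<delta>}"
  proof safe
    fix k assume "real k \<ge> c * ?n"
    then have "real k / ?n \<ge> c" using n by (simp add: field_simps)
    then show "real k / ?n \<ge> ?q + \<delta>" using assms by simp
  qed
  then have "measure_pmf.prob (binomial_pmf ?n ?q) {k. real k \<ge> c * ?n}
      \<le> measure_pmf.prob (binomial_pmf ?n ?q) {k. real k / ?n \<ge> ?q + \<delta>}"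
    by (intro measure_pmf.finite_measure_mono) auto
  also have "\<dots> \<le> exp (- 2 * real ?n * \<delta>\<^sup>2)"
    using prob_ge'[OF n \<open>\<delta> \<ge> 0\<close>] by simp
  finally show ?thesis using prob_esun_count[OF i U, where A = "\<lambda>k. real k \<ge> c * real ?n"] by simp
qed

lemma esun_estimate_between:
  fixes eps' :: real
  assumes i0: "i0 \<in> {1..L}" "m \<le> 2 ^ i0"
    and hit: "real (d*L) / 8 * (1 - eps') \<le> real (esun_count P alpha noise beta eps pos L d U s \<omega> i0)"
    and miss: "\<And>i. i \<in> {1..L} \<Longrightarrow> 16 * m < 2 ^ i \<Longrightarrow>
                 real (esun_count P alpha noise beta eps pos L d U s \<omega> i) < real (d*L) / 8 * (1 - eps')"
  shows "\<exists>x. esun_estimate P alpha noise beta eps pos L d eps' U s \<omega> = Some x \<and> m \<le> x \<and> x \<le> 16 * m"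
proof -
  define Q where "Q = {i \<in> {1..L}. real (d*L) / 8 * (1 - eps')
                                      \<le> real (esun_count P alpha noise beta eps pos L d U s \<omega> i)}"
  have "i0 \<in> Q" "finite Q" using i0 hit by (auto simp: Q_def)
  then have "Max Q \<in> Q" "i0 \<le> Max Q" by (metis Max_in empty_iff, simp)
  then have "2 ^ Max Q \<le> 16 * m" and "m \<le> 2 ^ Max Q"
    using miss i0(2) by (force simp: Q_def, meson order_trans one_le_numeral power_increasing)
  moreover have "esun_estimate P alpha noise beta eps pos L d eps' U s \<omega> = Some (2 ^ Max Q)"
    unfolding esun_estimate_def Let_def Q_def[symmetric] using \<open>i0 \<in> Q\<close> by auto
  ultimately show ?thesis using i0 by auto
qed

lemma prob_esun_counts_misplaced_le:
  assumes U: "finite U" "U \<noteq> {}" and "d > 0"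
    and lone: "\<And>u. u \<in> U \<Longrightarrow> receives_some P alpha noise beta eps pos {u} s"
    and i0: "i0 \<in> {1..L}" "card U \<le> 2 ^ i0" "2 ^ i0 \<le> 2 * card U"
  shows "measure_pmf.prob (esun_coins L d U)
           ({\<omega>. real (esun_count P alpha noise beta eps pos L d U s \<omega> i0) < 3/32 * real (d*L)}
            \<union> (\<Union>i\<in>{i \<in> {1..L}. 16 * card U < 2 ^ i}.
                 {\<omega>. 3/32 * real (d*L) \<le> real (esun_count P alpha noise beta eps pos L d U s \<omega> i)}))
         \<le> L * exp (- real (d*L) / 512)"
proof -
  let ?M = "esun_coins L d U" and ?n = "real (d*L)"
  let ?cnt = "\<lambda>\<omega> i. real (esun_count P alpha noise beta eps pos L d U s \<omega> i)"
  define X where "X = exp (- ?n / 512)"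
  define B where "B = {i \<in> {1..L}. 16 * card U < 2 ^ i}"
  have X: "exp (-2 * ?n * (1/32)\<^sup>2) = X" by (simp add: X_def power2_eq_square)
  have low: "measure_pmf.prob ?M {\<omega>. ?cnt \<omega> i0 < 3/32 * ?n} \<le> X"
    unfolding X[symmetric] using success_prob_ge_one_sixth[OF U lone i0(2,3)]
    by (intro prob_esun_count_less_le[OF i0(1) U(1) \<open>d > 0\<close>]) auto
  have high: "measure_pmf.prob ?M {\<omega>. 3/32 * ?n \<le> ?cnt \<omega> i} \<le> X" if "i \<in> B" for i
  proof -
    have "success_prob U s i \<le> card U / 2 ^ i" using U(1) by (rule success_prob_le)
    also have "\<dots> \<le> 1 / 16"
      using that by (simp add: B_def field_simps)
        (metis of_nat_less_iff of_nat_mult of_nat_numeral of_nat_power less_imp_le)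
    finally show ?thesis
      unfolding X[symmetric] using that
      by (intro prob_esun_count_ge_le[OF _ U(1) \<open>d > 0\<close>]) (auto simp: B_def)
  qed
  have "insert i0 B \<subseteq> {1..L}" "i0 \<notin> B" "finite B" using i0 by (auto simp: B_def)
  then have card_B: "card B + 1 \<le> L" using card_mono[of "{1..L}" "insert i0 B"] by simp
  have "measure_pmf.prob ?M ({\<omega>. ?cnt \<omega> i0 < 3/32 * ?n} \<union> (\<Union>i\<in>B. {\<omega>. 3/32 * ?n \<le> ?cnt \<omega> i}))
      \<le> measure_pmf.prob ?M {\<omega>. ?cnt \<omega> i0 < 3/32 * ?n}
         + measure_pmf.prob ?M (\<Union>i\<in>B. {\<omega>. 3/32 * ?n \<le> ?cnt \<omega> i})"
    by (rule measure_Un_le) auto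
  also have "\<dots> \<le> X + (\<Sum>i\<in>B. measure_pmf.prob ?M {\<omega>. 3/32 * ?n \<le> ?cnt \<omega> i})"
    by (intro add_mono low measure_pmf.finite_measure_subadditive_finite[OF \<open>finite B\<close>]) auto
  also have "\<dots> \<le> real (card B + 1) * X"
    using high sum_mono[of B _ "\<lambda>_. X"] by (simp add: algebra_simps)
  also have "\<dots> \<le> L * X" using card_B by (intro mult_right_mono) (auto simp: X_def)
  finally show ?thesis by (simp add: B_def X_def)
qed

lemma esun_estimate_prob_ge:
  assumes U: "finite U" "U \<noteq> {}" and "card U < 2 ^ L" and "d > 0"
    and lone: "\<And>u. u \<in> U \<Longrightarrow> receives_some P alpha noise beta eps pos {u} s"
  shows "measure_pmf.prob (esun_coins L d U)
           {\<omega>. \<exists>x. esun_estimate P alpha noise beta eps pos L d (1/4) U s \<omega> = Some x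
                  \<and> card U \<le> x \<and> x \<le> 16 * card U}
         \<ge> 1 - L * exp (- real (d*L) / 512)" (is "measure_pmf.prob ?M ?good \<ge> _")
proof -
  let ?cnt = "\<lambda>\<omega> i. real (esun_count P alpha noise beta eps pos L d U s \<omega> i)"
  obtain i0 where i0: "i0 \<in> {1..L}" "card U \<le> 2 ^ i0" "2 ^ i0 \<le> 2 * card U"
    using power_of_two_between[of "card U" L] U assms(3) by (force simp: Suc_le_eq card_gt_0_iff)
  define Bad where "Bad = {\<omega>. ?cnt \<omega> i0 < 3/32 * real (d*L)}
    \<union> (\<Union>i\<in>{i \<in> {1..L}. 16 * card U < 2 ^ i}. {\<omega>. 3/32 * real (d*L) \<le> ?cnt \<omega> i})"
  have "measure_pmf.prob ?M Bad \<le> L * exp (- real (d*L) / 512)"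
    unfolding Bad_def using U \<open>d > 0\<close> lone i0 by (rule prob_esun_counts_misplaced_le)
  moreover have "UNIV - Bad \<subseteq> ?good"
  proof
    fix \<omega> assume "\<omega> \<in> UNIV - Bad"
    moreover have "real (d*L) / 8 * (1 - 1/4) = 3/32 * real (d*L)" by simp
    ultimately show "\<omega> \<in> ?good"
      by (intro CollectI esun_estimate_between[OF i0(1,2)]) (auto simp: Bad_def)
  qed
  then have "measure_pmf.prob ?M (UNIV - Bad) \<le> measure_pmf.prob ?M ?good"
    by (intro measure_pmf.finite_measure_mono) auto
  ultimately show ?thesis using measure_pmf.prob_compl[of Bad ?M] by simp
qed

end

lemma mult_exp_neg_le_powr:
  fixes d'' :: real
  assumes "d'' \<ge> 0" and d: "real d \<ge> 512 * (1 + d'')" and k: "0 < k" "k \<le> 2 ^ L"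
  shows "real L * exp (- real (d * L) / 512) \<le> real k powr (- d'')"
proof -
  have "real L * exp (- real (d * L) / 512) \<le> exp (real L) * exp (- real (d * L) / 512)"
    using exp_ge_add_one_self[of "real L"] by (intro mult_right_mono) (linarith, simp)
  also have "\<dots> = exp (real L - real d * real L / 512)" by (simp add: exp_add[symmetric])
  also have "\<dots> \<le> exp (- (d'' * real L))"
    using mult_right_mono[OF d, of "real L"] by (simp add: algebra_simps)
  also have "\<dots> \<le> exp (- (d'' * (real L * ln 2)))"
  proof -
    have "real L * ln 2 \<le> real L" using ln_2_less_1 by (intro mult_right_le_one_le) auto
    then show ?thesis using \<open>d'' \<ge> 0\<close> by (intro exp_mono) (simp add: mult_left_mono)
  qed
  also have "\<dots> = (2 ^ L) powr (- d'')" by (simp add: powr_def ln_realpow)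
  also have "\<dots> \<le> real k powr (- d'')"
  proof (rule powr_mono2')
    have "real k \<le> real (2 ^ L)" using k by linarith
    then show "real k \<le> 2 ^ L" by simp
  qed (use \<open>d'' \<ge> 0\<close> k in auto)
  finally show ?thesis .
qed

theorem lemma1:
  fixes d'' :: real
  assumes "d'' \<ge> 1"
  shows "\<exists>(d::nat) (eps'::real). d > 0 \<and> 0 < eps' \<and> eps' < 1 \<and>
    (\<forall>(P::real) (alpha::real) (noise::real) (beta::real) (eps::real)
       (N::nat) (L::nat) (V::nat set) (pos :: nat \<Rightarrow> real^2) (s::nat) (U::nat set).
       P > 0 \<longrightarrow> alpha > 2 \<longrightarrow> noise > 0 \<longrightarrow> beta \<ge> 1 \<longrightarrow> 0 < eps \<longrightarrow> eps < 1 \<longrightarrow>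
       N = 2 ^ L \<longrightarrow> V \<subseteq> {1..N} \<longrightarrow> inj_on pos V \<longrightarrow>
       s \<in> V \<longrightarrow> U \<subseteq> V \<longrightarrow> U \<noteq> {} \<longrightarrow>
       (\<forall>u\<in>U. u \<noteq> s \<and> dist (pos u) (pos s) \<le> (1 - eps) * sinr_range P alpha noise beta) \<longrightarrow>
       measure_pmf.prob (esun_coins L d U)
         {omega. \<exists>x. esun_estimate P alpha noise beta eps pos L d eps' U s omega = Some x
                      \<and> card U \<le> x \<and> x \<le> 16 * card U}
       \<ge> 1 - real (card V) powr (- d''))"
proof -
  define d :: nat where "d = nat \<lceil>512 * (1 + d'')\<rceil>"
  have d: "real d \<ge> 512 * (1 + d'')" unfolding d_def by linarith
  then have "d > 0" using assms by (intro of_nat_less_imp_less) simp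
  show ?thesis
  proof (intro exI[of _ d] exI[of _ "1/4::real"] conjI allI impI)
    fix P alpha noise beta eps :: real and N L :: nat and V U :: "nat set"
      and pos :: "nat \<Rightarrow> real^2" and s :: nat
    assume sinr: "P > 0" "alpha > 2" "noise > 0" "beta \<ge> 1" "0 < eps" "eps < 1"
      and V: "N = 2 ^ L" "V \<subseteq> {1..N}" "inj_on pos V" "s \<in> V" and U: "U \<subseteq> V" "U \<noteq> {}"
      and nbr: "\<forall>u\<in>U. u \<noteq> s \<and> dist (pos u) (pos s) \<le> (1 - eps) * sinr_range P alpha noise beta"
    have "finite V" "card V \<le> 2 ^ L" using V card_mono[of "{1..N}" V] finite_subset by auto
    moreover have "U \<subset> V" using U(1) V(4) nbr by blast
    then have "card U < card V" using \<open>finite V\<close> by (simp add: psubset_card_mono)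
    moreover have "receives_some P alpha noise beta eps pos {u} s" if "u \<in> U" for u
    proof -
      have "u \<noteq> s" "u \<in> V" using that U nbr by auto
      then have "pos u \<noteq> pos s" using V(3,4) by (auto dest: inj_onD)
      then show ?thesis using \<open>u \<noteq> s\<close> that nbr by (intro receives_some_singleton[OF sinr]) auto
    qed
    ultimately have "1 - L * exp (- real (d*L) / 512)
        \<le> measure_pmf.prob (esun_coins L d U)
            {\<omega>. \<exists>x. esun_estimate P alpha noise beta eps pos L d (1/4) U s \<omega> = Some x
                   \<and> card U \<le> x \<and> x \<le> 16 * card U}"
      using U \<open>d > 0\<close> by (intro esun_estimate_prob_ge) (auto intro: finite_subset)
    moreover have "L * exp (- real (d*L) / 512) \<le> real (card V) powr (- d'')"
      using assms d \<open>card V \<le> 2 ^ L\<close> \<open>finite V\<close> V(4) by (intro mult_exp_neg_le_powr) (auto simp: card_gt_0_iff)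
    ultimately show "measure_pmf.prob (esun_coins L d U)
        {\<omega>. \<exists>x. esun_estimate P alpha noise beta eps pos L d (1/4) U s \<omega> = Some x
               \<and> card U \<le> x \<and> x \<le> 16 * card U} \<ge> 1 - real (card V) powr (- d'')"
      by linarith
  qed (use \<open>d > 0\<close> in auto)
qed

end
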